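(* For every positive integer $n$, the number of edges of $OD(\mathbb{Z}_n)$ is $$|E(OD(\mathbb{Z}_n))|=\frac12\sum_{m\mid n}\Big(m+\sum_{\lambda\mid\frac{n}{m}}\phi(\lambda m)-2\phi(m)\Big)\phi(m),$$ where $\phi$ is Euler's totient function and sums run over positive divisors.
   Context: $\mathbb{Z}_n$ is the additive cyclic group of integers modulo $n$. For a finite group $G$, $o(x)$ denotes the order of $x\in G$. The order-divisor graph $OD(G)$ is the simple undirected graph with vertex set $G$, in which two distinct vertices $x,y$ are adjacent if and only if $o(x)\neq o(y)$ and either $o(x)\mid o(y)$ or $o(y)\mid o(x)$. *)

theory Defs
  imports "HOL-Algebra.Algebra" "HOL-Number_Theory.Number_Theory"
begin

definition od_edges :: "('a, 'b) monoid_scheme \<Rightarrow> 'a set set" where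
  "od_edges G = {{x, y} | x y. x \<in> carrier G \<and> y \<in> carrier G \<and> x \<noteq> y \<and>
      group.ord G x \<noteq> group.ord G y \<and>
      (group.ord G x dvd group.ord G y \<or> group.ord G y dvd group.ord G x)}"

end

theory Submission
  imports Defs
begin

text \<open>Double counting: twice the number of edges is the sum of the degrees. In \<open>\<int>\<^sub>n\<close> there
  are exactly \<open>\<phi>(d)\<close> elements of each order \<open>d | n\<close>. So for an element of order \<open>m\<close>, the
  elements whose order divides \<open>m\<close> number \<open>\<Sum>d|m. \<phi>(d) = m\<close>, those whose order is a multiple
  of \<open>m\<close> number \<open>\<Sum>\<lambda>|n/m. \<phi>(\<lambda>m)\<close>, and the \<open>\<phi>(m)\<close> elements of order exactly \<open>m\<close> lie in
  both sets but are not neighbours; its degree is \<open>m + \<Sum>\<lambda>|n/m. \<phi>(\<lambda>m) - 2\<phi>(m)\<close>.\<close>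

lemma sum_multiples_dividing:
  fixes m n :: nat
  assumes "m dvd n" "n > 0"
  shows "(\<Sum>d | d dvd n \<and> m dvd d. g d) = (\<Sum>l | l dvd n div m. g (l * m))"
proof (rule sum.reindex_bij_witness[of _ "\<lambda>l. l * m" "\<lambda>d. d div m"])
  have "m > 0" using assms by (auto intro: gr0I)
  then show "l * m div m = l" for l by simp
  show "d div m * m = d" if "d \<in> {d. d dvd n \<and> m dvd d}" for d using that by auto
  show "l * m \<in> {d. d dvd n \<and> m dvd d}" if "l \<in> {l. l dvd n div m}" for l
    using that assms by (auto simp: dvd_div_iff_mult)
  show "d div m \<in> {l. l dvd n div m}" if "d \<in> {d. d dvd n \<and> m dvd d}" for d
    using that assms by (auto intro: div_dvd_div)
qed simp

lemma div_dvd_dividend: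
  fixes n d :: nat
  shows "d dvd n \<Longrightarrow> n div d dvd n"
  by (metis dvd_div_mult_self dvd_triv_left)

lemma div_eq_iff_eq_div:
  fixes n a b :: nat
  assumes "n > 0" "a dvd n" "b dvd n"
  shows "n div a = b \<longleftrightarrow> a = n div b"
  using assms by (metis dvd_div_mult_self dvd_mult_div_cancel nonzero_mult_div_cancel_left
      div_by_0 not_gr0 mult_eq_0_iff)

lemma card_lessThan_gcd_eq_totient:
  assumes "n > 0" "d dvd n"
  shows "card {k\<in>{..<n}. gcd k n = d} = totient (n div d)"
proof -
  have "bij_betw (\<lambda>k. n - k) {k\<in>{0<..n}. gcd k n = d} {k\<in>{..<n}. gcd k n = d}"
    by (rule bij_betw_byWitness[where f' = "\<lambda>k. n - k"]) (auto simp: gcd_diff2_nat image_iff)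
  then show ?thesis using card_gcd_eq_totient[OF assms] by (simp add: bij_betw_same_card)
qed

lemma card_doubletons_handshake:
  assumes "finite V" and sym: "\<And>x y. adj x y \<Longrightarrow> adj y x" and irrefl: "\<And>x. \<not> adj x x"
  shows "2 * card {{x, y} | x y. x \<in> V \<and> y \<in> V \<and> adj x y} = (\<Sum>x\<in>V. card {y\<in>V. adj x y})"
proof -
  let ?E = "{{x, y} | x y. x \<in> V \<and> y \<in> V \<and> adj x y}"
  define A where "A = (SIGMA x:V. {y\<in>V. adj x y})"
  have fin_A: "finite A" using \<open>finite V\<close> by (simp add: A_def)
  have edge_image: "(\<lambda>(x, y). {x, y}) ` A \<subseteq> ?E" by (auto simp: A_def)
  have fin_E: "finite ?E"
  proof (rule finite_subset)
    show "?E \<subseteq> Pow V" by auto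
  qed (use \<open>finite V\<close> in simp)
  have fibre: "card {p\<in>A. (\<lambda>(x, y). {x, y}) p = e} = 2" if "e \<in> ?E" for e
  proof -
    obtain x y where e: "e = {x, y}" "x \<in> V" "y \<in> V" "adj x y" using \<open>e \<in> ?E\<close> by blast
    have "x \<noteq> y" using e(4) irrefl by blast
    have "{p\<in>A. (\<lambda>(x, y). {x, y}) p = e} = {(x, y), (y, x)}"
      using e sym by (auto simp: A_def doubleton_eq_iff)
    then show ?thesis using \<open>x \<noteq> y\<close> by simp
  qed
  have "(\<Sum>x\<in>V. card {y\<in>V. adj x y}) = card A"
    using \<open>finite V\<close> by (simp add: A_def card_SigmaI)
  also have "\<dots> = (\<Sum>e\<in>?E. card {p\<in>A. (\<lambda>(x, y). {x, y}) p = e})"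
    using sum.group[OF fin_A fin_E edge_image, of "\<lambda>_. 1::nat"] by simp
  also have "\<dots> = 2 * card ?E" using fibre by simp
  finally show ?thesis ..
qed

text \<open>The model is a cyclic group of order \<open>n\<close> with \<open>f\<close> the element order.\<close>

locale totient_graded =
  fixes C :: "'a set" and f :: "'a \<Rightarrow> nat" and n :: nat
  assumes n_pos: "n > 0" and finite_C: "finite C" and f_dvd: "x \<in> C \<Longrightarrow> f x dvd n"
    and card_level: "d dvd n \<Longrightarrow> card {x\<in>C. f x = d} = totient d"
begin

lemma sum_over_levels:
  fixes g :: "nat \<Rightarrow> 'b::comm_semiring_1"
  shows "(\<Sum>x\<in>C. g (f x)) = (\<Sum>d | d dvd n. of_nat (totient d) * g d)"
proof -
  have "(\<Sum>x\<in>C. g (f x)) = (\<Sum>d | d dvd n. \<Sum>x\<in>{x\<in>C. f x = d}. g (f x))"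
    by (rule sum.group[symmetric]) (use finite_C n_pos f_dvd in auto)
  also have "\<dots> = (\<Sum>d | d dvd n. of_nat (totient d) * g d)"
    by (intro sum.cong refl) (simp add: card_level)
  finally show ?thesis .
qed

lemma card_filter_eq_sum_of_bool:
  "card {y\<in>C. P y} = (\<Sum>y\<in>C. of_bool (P y))"
  using finite_C by (simp add: Int_def)

lemma card_level_divisors:
  assumes "m dvd n"
  shows "card {y\<in>C. f y dvd m} = m"
proof -
  have "card {y\<in>C. f y dvd m} = (\<Sum>d | d dvd n. totient d * of_bool (d dvd m))"
    using sum_over_levels[of "\<lambda>d. of_bool (d dvd m) :: nat"]
    by (simp add: card_filter_eq_sum_of_bool)
  also have "\<dots> = (\<Sum>d | d dvd n \<and> d dvd m. totient d)"
    using n_pos by (simp add: sum.inter_filter[symmetric] Int_def)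
  also have "{d. d dvd n \<and> d dvd m} = {d. d dvd m}"
    using assms by (auto intro: dvd_trans)
  also have "(\<Sum>d | d dvd m. totient d) = m" by (rule totient_divisor_sum)
  finally show ?thesis .
qed

lemma card_level_multiples:
  assumes "m dvd n"
  shows "card {y\<in>C. m dvd f y} = (\<Sum>l | l dvd n div m. totient (l * m))"
proof -
  have "card {y\<in>C. m dvd f y} = (\<Sum>d | d dvd n. totient d * of_bool (m dvd d))"
    using sum_over_levels[of "\<lambda>d. of_bool (m dvd d) :: nat"]
    by (simp add: card_filter_eq_sum_of_bool)
  also have "\<dots> = (\<Sum>d | d dvd n \<and> m dvd d. totient d)"
    using n_pos by (simp add: sum.inter_filter[symmetric] Int_def)
  also have "\<dots> = (\<Sum>l | l dvd n div m. totient (l * m))"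
    using assms n_pos by (rule sum_multiples_dividing)
  finally show ?thesis .
qed

lemma card_strictly_comparable:
  assumes "x \<in> C"
  shows "real (card {y\<in>C. x \<noteq> y \<and> f x \<noteq> f y \<and> (f x dvd f y \<or> f y dvd f x)}) =
    real (f x) + real (card {y\<in>C. f x dvd f y}) - 2 * real (totient (f x))"
proof -
  define D where "D = {y\<in>C. f y dvd f x}"
  define U where "U = {y\<in>C. f x dvd f y}"
  define L where "L = {y\<in>C. f y = f x}"
  have fin: "finite D" "finite U" using finite_C by (simp_all add: D_def U_def)
  have "D \<inter> U = L" by (auto simp: D_def U_def L_def dest: dvd_antisym)
  have "{y\<in>C. x \<noteq> y \<and> f x \<noteq> f y \<and> (f x dvd f y \<or> f y dvd f x)} = (D \<union> U) - L"
    by (auto simp: D_def U_def L_def)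
  moreover have "L \<subseteq> D \<union> U" by (auto simp: D_def L_def)
  ultimately have "real (card {y\<in>C. x \<noteq> y \<and> f x \<noteq> f y \<and> (f x dvd f y \<or> f y dvd f x)}) =
      real (card (D \<union> U)) - real (card L)"
    using fin by (simp add: card_Diff_subset finite_subset card_mono of_nat_diff)
  moreover have "real (card (D \<union> U)) + real (card L) = real (card D) + real (card U)"
    using card_Un_Int[OF fin] \<open>D \<inter> U = L\<close> by (simp flip: of_nat_add)
  moreover have "card D = f x" unfolding D_def using assms by (intro card_level_divisors f_dvd)
  moreover have "card L = totient (f x)" unfolding L_def using assms by (simp add: card_level f_dvd)
  ultimately show ?thesis by (simp add: U_def)
qed

lemma card_comparable_pairs:
  "real (2 * card {{x, y} | x y. x \<in> C \<and> y \<in> C \<and> x \<noteq> y \<and> f x \<noteq> f y \<and>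
      (f x dvd f y \<or> f y dvd f x)}) =
    (\<Sum>m | m dvd n.
       (real m + (\<Sum>l | l dvd n div m. real (totient (l * m))) - 2 * real (totient m))
       * real (totient m))"
proof -
  define h where "h m = real m + (\<Sum>l | l dvd n div m. real (totient (l * m))) - 2 * real (totient m)"
    for m
  have "2 * card {{x, y} | x y. x \<in> C \<and> y \<in> C \<and> x \<noteq> y \<and> f x \<noteq> f y \<and>
      (f x dvd f y \<or> f y dvd f x)} =
      (\<Sum>x\<in>C. card {y\<in>C. x \<noteq> y \<and> f x \<noteq> f y \<and> (f x dvd f y \<or> f y dvd f x)})"
    by (rule card_doubletons_handshake[OF finite_C]) auto
  also have "real \<dots> = (\<Sum>x\<in>C. h (f x))"
    unfolding of_nat_sum
    by (intro sum.cong refl) (simp add: card_strictly_comparable card_level_multiples f_dvd h_def)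
  also have "\<dots> = (\<Sum>m | m dvd n. real (totient m) * h m)"
    by (rule sum_over_levels)
  finally show ?thesis by (simp add: h_def mult.commute)
qed

end

lemma ord_integer_mod_group:
  assumes "k < n"
  shows "group.ord (integer_mod_group n) (int k) = n div gcd n k"
proof -
  interpret G: group "integer_mod_group n" by simp
  have "int k \<in> carrier (integer_mod_group n)" using assms by (simp add: carrier_integer_mod_group)
  moreover have "(int k [^]\<^bsub>integer_mod_group n\<^esub> m = \<one>\<^bsub>integer_mod_group n\<^esub>) \<longleftrightarrow>
      n div gcd n k dvd m" for m :: nat
  proof -
    have "(int m * int k) mod int n = 0 \<longleftrightarrow> n dvd m * k"
      by (metis of_nat_mult dvd_eq_mod_eq_0 of_nat_dvd_iff)
    also have "\<dots> \<longleftrightarrow> n div gcd n k dvd m"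
      using assms by (simp add: div_dvd_iff_mult gcd_mult_distrib_nat mult.commute)
    finally show ?thesis by simp
  qed
  ultimately show ?thesis by (simp add: G.ord_unique)
qed

lemma carrier_integer_mod_group_image:
  "n > 0 \<Longrightarrow> carrier (integer_mod_group n) = int ` {..<n}"
  by (auto simp: carrier_integer_mod_group image_iff intro!: bexI[of _ "nat _"])

lemma totient_graded_integer_mod_group:
  assumes "n > 0"
  shows "totient_graded (carrier (integer_mod_group n)) (group.ord (integer_mod_group n)) n"
proof
  let ?ord = "group.ord (integer_mod_group n)"
  have carrier: "carrier (integer_mod_group n) = int ` {..<n}"
    using assms by (rule carrier_integer_mod_group_image)
  show "n > 0" "finite (carrier (integer_mod_group n))" using assms by (simp_all add: carrier)
  show "?ord x dvd n" if "x \<in> carrier (integer_mod_group n)" for x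
    using that by (auto simp: carrier ord_integer_mod_group div_dvd_dividend)
  show "card {x \<in> carrier (integer_mod_group n). ?ord x = d} = totient d" if "d dvd n" for d
  proof -
    have "?ord (int k) = d \<longleftrightarrow> gcd k n = n div d" if "k < n" for k
      using div_eq_iff_eq_div[of n "gcd n k" d] assms \<open>d dvd n\<close> \<open>k < n\<close>
      by (simp add: ord_integer_mod_group gcd.commute)
    then have "{x \<in> carrier (integer_mod_group n). ?ord x = d} = int ` {k\<in>{..<n}. gcd k n = n div d}"
      unfolding carrier by auto
    moreover have "n div (n div d) = d" using that assms by (simp add: div_div_eq_right)
    ultimately show ?thesis
      using card_lessThan_gcd_eq_totient[OF assms div_dvd_dividend[OF that]] by (simp add: card_image)
  qed
qed

theorem mainTheorem15:
  fixes n :: nat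
  assumes "n > 0"
  shows "real (card (od_edges (integer_mod_group n))) =
    (1/2) * (\<Sum>m | m dvd n.
       (real m + (\<Sum>l | l dvd (n div m). real (totient (l * m))) - 2 * real (totient m))
       * real (totient m))"
proof -
  interpret totient_graded "carrier (integer_mod_group n)" "group.ord (integer_mod_group n)" n
    using assms by (rule totient_graded_integer_mod_group)
  show ?thesis using card_comparable_pairs unfolding od_edges_def by simp
qed

end
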